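(* Under the standing assumptions, suppose $a>1/4$ and $m\ge 6$, and let $\theta_a=\cos^{-1}\!\left(-\frac{1}{2\sqrt a}\right)$. For an integer $h$ with $\lfloor (m+1)/2\rfloor+1\le h\le m+1$ let $$J_h=\begin{cases}\left(\frac{h-1}{m+1}\pi,\frac{h}{m+1}\pi\right) & \text{if } \lfloor (m+1)/2\rfloor+2\le h\le m+1,\\[2pt] \left(\frac{\pi}{2},\frac{h}{m+1}\pi\right) & \text{if } h=\lfloor (m+1)/2\rfloor+1.\end{cases}$$ If $\theta_a\in J_h$, then $g_m$ has at least two zeros in $J_h\setminus\{\theta_a\}$ when $\lfloor (m+1)/2\rfloor+2\le h\le m$, and at least one zero in $J_h\setminus\{\theta_a\}$ when $h=m+1$ or $h=\lfloor(m+1)/2\rfloor+1$.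
   Context: Standing assumptions: $a,b\in\mathbb{R}$ with $b>0$, $1+a+b>0$, $9-27a+b>0$, $2-8a+8a^2+ab\ne0$, $b+1-a\ne0$. Let $f^*(\zeta,\theta)=(\zeta+2\cos\theta)(2\zeta\cos\theta+1)+b\zeta-a(\zeta+2\cos\theta)^3$. Under these assumptions, for each $\theta\in(\pi/2,\pi)$ the polynomial $f^*(\cdot,\theta)$ has exactly one real zero in $(-1,1)$; denote it $w(\theta)$ and set $\zeta(\theta)=1/w(\theta)$ (finite except at $\theta_a$). For $\theta\in(\pi/2,\pi)$ with $w(\theta)\ne0$ define $$g_m(\theta)=\frac{(\zeta(\theta)-\cos\theta)\sin((m+1)\theta)}{\sin\theta}-\cos((m+1)\theta)+\frac{1}{\zeta(\theta)^{m+1}}.$$ *)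

theory Defs
  imports Complex_Main
begin

definition fstar :: "real \<Rightarrow> real \<Rightarrow> real \<Rightarrow> real \<Rightarrow> real" where
  "fstar a b z t = (z + 2 * cos t) * (2 * z * cos t + 1) + b * z - a * (z + 2 * cos t) ^ 3"

definition wz :: "real \<Rightarrow> real \<Rightarrow> real \<Rightarrow> real" where
  "wz a b t = (THE z. -1 < z \<and> z < 1 \<and> fstar a b z t = 0)"

definition zeta :: "real \<Rightarrow> real \<Rightarrow> real \<Rightarrow> real" where
  "zeta a b t = 1 / wz a b t"

definition gm :: "real \<Rightarrow> real \<Rightarrow> nat \<Rightarrow> real \<Rightarrow> real" where
  "gm a b m t = (zeta a b t - cos t) * sin ((real m + 1) * t) / sin t
      - cos ((real m + 1) * t) + 1 / (zeta a b t) ^ (m + 1)"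

definition theta_a :: "real \<Rightarrow> real" where
  "theta_a a = arccos (- 1 / (2 * sqrt a))"

definition Jh :: "nat \<Rightarrow> nat \<Rightarrow> real set" where
  "Jh m h = (if h = (m + 1) div 2 + 1
             then {pi / 2 <..< real h / (real m + 1) * pi}
             else {(real h - 1) / (real m + 1) * pi <..< real h / (real m + 1) * pi})"

end

theory Submission
  imports Defs
begin

(* For t in (pi/2, pi) the cubic fstar(., t) has negative leading coefficient, is negative at -1
   and positive at 1, so w(t) is its only root in (-1, 1), fstar changes sign there and w is
   continuous.  As fstar(0, t) = 2 cos t (1 - 4 a cos^2 t), w is positive before theta_a, vanishes
   at theta_a and is negative after it.  At a node k pi / (m + 1) the sine terms of g_m vanish, so
   g_m = w^(m+1) - (-1)^k has the sign of -(-1)^k.  If theta_a lies between the nodes k and k + 1,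
   the term sin((m+1) t) / (w sin t) drives (-1)^k g_m to +infinity left of theta_a and to
   -infinity right of it, and the intermediate value theorem gives a zero between theta_a and
   each of the two nodes lying in (pi/2, pi). *)

lemma exists_zero_of_sign_change:
  fixes f :: "real \<Rightarrow> real"
  assumes "x \<le> y" "continuous_on {x..y} f" "f x * f y < 0"
  shows "\<exists>t. x < t \<and> t < y \<and> f t = 0"
proof -
  have "\<exists>t. x \<le> t \<and> t \<le> y \<and> f t = 0"
  proof (cases "f x < 0")
    case True
    then have "0 \<le> f y" using assms(3) by (auto simp: mult_less_0_iff)
    then show ?thesis using IVT'[of f x 0 y] True assms(1,2) by auto
  next
    case False
    then have "f y \<le> 0" using assms(3) by (auto simp: mult_less_0_iff)
    then show ?thesis using IVT2'[of f y 0 x] False assms(1,2) by auto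
  qed
  moreover have "f x \<noteq> 0" "f y \<noteq> 0" using assms(3) by auto
  ultimately show ?thesis by (metis order.order_iff_strict)
qed

lemma sign_change_neg_one_power:
  fixes x y :: real
  assumes "(-1) ^ k * x < 0" "0 < (-1) ^ k * y"
  shows "x * y < 0"
proof -
  have "x * y = ((-1) ^ k * (-1) ^ k) * (x * y)" by (simp flip: power_add)
  also have "\<dots> = ((-1) ^ k * x) * ((-1) ^ k * y)" by (simp only: ac_simps)
  finally show ?thesis using mult_neg_pos[OF assms] by (simp only:)
qed

lemma cubic_root_in_interval_unique:
  fixes c0 c1 c2 c3 z1 z2 :: real
  defines "p \<equiv> \<lambda>z. c3 * z ^ 3 + c2 * z ^ 2 + c1 * z + c0"
  assumes "c3 < 0" "p (-1) < 0" "0 < p 1"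
    and "-1 < z1" "z1 < 1" "p z1 = 0" and "-1 < z2" "z2 < 1" "p z2 = 0"
  shows "z1 = z2"
proof -
  (* A cubic vanishing at y1 and y2 is (z - y1) (z - y2) (c3 z + d); the signs of p at -1 and 1
     then force -c3 < d < c3. *)
  have False if "-1 < y1" "y1 < y2" "y2 < 1" "p y1 = 0" "p y2 = 0" for y1 y2
  proof -
    define d where "d = c2 + c3 * (y1 + y2)"
    define \<alpha> where "\<alpha> = c1 - c3 * y1 * y2 + d * (y1 + y2)"
    define \<beta> where "\<beta> = c0 - d * y1 * y2"
    have division: "p z = (z - y1) * (z - y2) * (c3 * z + d) + \<alpha> * z + \<beta>" for z
      unfolding p_def d_def \<alpha>_def \<beta>_def by (simp add: algebra_simps power3_eq_cube power2_eq_square)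
    have "\<alpha> * y1 + \<beta> = 0" "\<alpha> * y2 + \<beta> = 0"
      using division[of y1] division[of y2] that by simp_all
    moreover have "\<alpha> * (y1 - y2) = (\<alpha> * y1 + \<beta>) - (\<alpha> * y2 + \<beta>)" by (simp add: algebra_simps)
    ultimately have "\<alpha> = 0" "\<beta> = 0" using \<open>y1 < y2\<close> by auto
    then have "p (-1) = (1 + y1) * (1 + y2) * (d - c3)" "p 1 = (1 - y1) * (1 - y2) * (c3 + d)"
      using division[of "-1"] division[of 1] by (simp_all add: algebra_simps)
    moreover have "0 < (1 + y1) * (1 + y2)" "0 < (1 - y1) * (1 - y2)" using that by simp_all
    ultimately have "d < c3" "- c3 < d"
      using assms(3,4) by (auto simp: zero_less_mult_iff mult_less_0_iff)
    then show False using \<open>c3 < 0\<close> by linarith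
  qed
  then show ?thesis using assms(5-10) by (metis linorder_neqE_linordered_idom)
qed

lemma cos_neg:
  fixes t :: real
  assumes "pi / 2 < t" "t < pi"
  shows "cos t < 0"
  using assms cos_gt_zero_pi[of "pi - t"] by simp

lemma cos_theta_a:
  assumes "1 / 4 < a"
  shows "cos (theta_a a) = - 1 / (2 * sqrt a)" "pi / 2 < theta_a a" "theta_a a < pi"
proof -
  have "0 < a" using assms by simp
  have "1 / 2 < sqrt a" using assms real_sqrt_less_iff[of "1/4" a] by (simp add: real_sqrt_divide)
  then have "1 / (2 * sqrt a) < 1" "0 < 1 / (2 * sqrt a)" using \<open>0 < a\<close> by (simp_all add: divide_less_eq)
  then have c: "-1 < - 1 / (2 * sqrt a)" "- 1 / (2 * sqrt a) < 0" by simp_all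
  then show cos: "cos (theta_a a) = - 1 / (2 * sqrt a)"
    unfolding theta_a_def using c by (intro cos_arccos) linarith+
  have "0 \<le> theta_a a" "theta_a a \<le> pi"
    unfolding theta_a_def using c by (intro arccos_lbound arccos_ubound; linarith)+
  moreover have "theta_a a \<noteq> pi" using cos c by auto
  moreover have "\<not> theta_a a \<le> pi / 2" using cos c cos_ge_zero[of "theta_a a"] \<open>0 \<le> theta_a a\<close> by auto
  ultimately show "pi / 2 < theta_a a" "theta_a a < pi" by auto
qed

lemma four_a_cos_theta_a_squared:
  assumes "1 / 4 < a"
  shows "4 * a * (cos (theta_a a))\<^sup>2 = 1"
  using assms unfolding cos_theta_a(1)[OF assms] by (simp add: power_divide power_mult_distrib)

definition node :: "nat \<Rightarrow> nat \<Rightarrow> real" where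
  "node m k = real k / (real m + 1) * pi"

lemma mult_node: "(real m + 1) * node m k = real k * pi"
  unfolding node_def by (simp add: field_simps)

lemma node_less_iff: "node m k < x * pi \<longleftrightarrow> real k < x * (real m + 1)"
  unfolding node_def by (simp add: pos_divide_less_eq)

lemma less_node_iff: "x * pi < node m k \<longleftrightarrow> x * (real m + 1) < real k"
  unfolding node_def by (simp add: pos_less_divide_eq)

lemma node_less_pi: "k < m + 1 \<Longrightarrow> node m k < pi"
  using node_less_iff[of m k 1] by simp

lemma node_le_half_pi: "2 * k \<le> m + 1 \<Longrightarrow> node m k \<le> pi / 2"
  using less_node_iff[of "1 / 2" m k] by simp

lemma half_pi_less_node: "m + 1 < 2 * k \<Longrightarrow> pi / 2 < node m k"
  using less_node_iff[of "1 / 2" m k] by simp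

lemma sin_sign_between_nodes:
  assumes "node m k < t" "t < node m (Suc k)"
  shows "0 < (-1) ^ k * sin ((real m + 1) * t)"
proof -
  define x where "x = (real m + 1) * t - real k * pi"
  have "real k * pi < (real m + 1) * t"
    using mult_strict_left_mono[OF assms(1), of "real m + 1"] mult_node[of m k] by simp
  moreover have "(real m + 1) * t < real k * pi + pi"
    using mult_strict_left_mono[OF assms(2), of "real m + 1"] mult_node[of m "Suc k"]
    by (simp add: distrib_right)
  ultimately have "0 < x" "x < pi" unfolding x_def by simp_all
  have "sin ((real m + 1) * t) = sin (x + real k * pi)" unfolding x_def by simp
  also have "\<dots> = (-1) ^ k * sin x" by (simp add: sin_add sin_npi cos_npi)
  finally have "(-1) ^ k * sin ((real m + 1) * t) = ((-1) ^ k * (-1) ^ k) * sin x" by simp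
  then show ?thesis using sin_gt_zero[OF \<open>0 < x\<close> \<open>x < pi\<close>] by (simp flip: power_add)
qed

lemma fstar_cubic:
  "fstar a b z t = - a * z ^ 3 + (2 * cos t - 6 * a * cos t) * z ^ 2
     + (1 + 4 * (cos t)\<^sup>2 + b - 12 * a * (cos t)\<^sup>2) * z + (2 * cos t - 8 * a * (cos t) ^ 3)"
  unfolding fstar_def by (simp add: algebra_simps power3_eq_cube power2_eq_square)

lemma fstar_zero: "fstar a b 0 t = 2 * cos t * (1 - 4 * a * (cos t)\<^sup>2)"
  unfolding fstar_def by (simp add: algebra_simps power3_eq_cube power2_eq_square)

locale gm_regime =
  fixes a b :: real
  assumes a_gt: "1 / 4 < a" and b_pos: "0 < b" and b_gt: "27 * a - 9 < b"
begin

lemma b_gt_a_minus_one: "a - 1 < b"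
  using a_gt b_pos b_gt by (cases "a \<le> 1") linarith+

lemma fstar_minus_one_neg:
  assumes "cos t \<le> 0"
  shows "fstar a b (-1) t < 0"
proof -
  define v where "v = 1 - 2 * cos t"
  have v: "1 \<le> v" "v \<le> 3" using assms cos_ge_minus_one[of t] unfolding v_def by linarith+
  (* a v^3 - v^2 lies below its chord over [1, 3], whose end values a - 1 and 27 a - 9 are < b. *)
  have chord: "2 * (a * v ^ 3 - v\<^sup>2) = (3 - v) * (a - 1) + (v - 1) * (27 * a - 9)
      + 2 * ((v - 1) * (v - 3) * (a * v + 4 * a - 1))"
    by (simp add: algebra_simps power3_eq_cube power2_eq_square)
  have "(v - 1) * (v - 3) \<le> 0" using v by (intro mult_nonneg_nonpos) auto
  moreover have "0 \<le> a * v + 4 * a - 1" using v a_gt mult_left_mono[of 1 v a] by linarith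
  ultimately have "(v - 1) * (v - 3) * (a * v + 4 * a - 1) \<le> 0" by (rule mult_nonpos_nonneg)
  moreover have "(3 - v) * (a - 1) + (v - 1) * (27 * a - 9) < 2 * b"
  proof -
    define \<delta> where "\<delta> = min (b - (a - 1)) (b - (27 * a - 9))"
    have "0 < \<delta>" using b_gt b_gt_a_minus_one unfolding \<delta>_def by simp
    have "(3 - v) * \<delta> \<le> (3 - v) * (b - (a - 1))" "(v - 1) * \<delta> \<le> (v - 1) * (b - (27 * a - 9))"
      using v unfolding \<delta>_def by (intro mult_left_mono; simp)+
    then show ?thesis using \<open>0 < \<delta>\<close> by (simp add: algebra_simps)
  qed
  moreover have "fstar a b (-1) t = a * v ^ 3 - v\<^sup>2 - b"
    unfolding fstar_def v_def by (simp add: algebra_simps power3_eq_cube power2_eq_square)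
  ultimately show ?thesis using chord by (smt (verit))
qed

lemma fstar_one_pos:
  assumes "cos t \<le> 0"
  shows "0 < fstar a b 1 t"
proof -
  define u where "u = 1 + 2 * cos t"
  have u: "-1 \<le> u" "u \<le> 1" using assms cos_ge_minus_one[of t] unfolding u_def by linarith+
  have "min 0 (1 - a) \<le> u\<^sup>2 * (1 - a * u)"
  proof (cases "0 \<le> 1 - a * u")
    case False
    have "u\<^sup>2 \<le> 1" using u by (simp add: abs_square_le_1 abs_le_iff)
    then have "1 - a * u \<le> u\<^sup>2 * (1 - a * u)" using False mult_right_mono_neg[of "u\<^sup>2" 1 "1 - a * u"] by simp
    moreover have "a * u \<le> a" using u a_gt by (simp add: mult_left_le)
    ultimately show ?thesis by linarith
  qed (simp add: min_le_iff_disj)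
  moreover have "fstar a b 1 t = u\<^sup>2 * (1 - a * u) + b"
    unfolding fstar_def u_def by (simp add: algebra_simps power3_eq_cube power2_eq_square)
  ultimately show ?thesis using b_pos b_gt_a_minus_one by linarith
qed

lemma fstar_root_unique:
  assumes "cos t \<le> 0" "-1 < z1" "z1 < 1" "fstar a b z1 t = 0" "-1 < z2" "z2 < 1" "fstar a b z2 t = 0"
  shows "z1 = z2"
  by (rule cubic_root_in_interval_unique[of "-a" "2 * cos t - 6 * a * cos t"
        "1 + 4 * (cos t)\<^sup>2 + b - 12 * a * (cos t)\<^sup>2" "2 * cos t - 8 * a * (cos t) ^ 3"])
    (use assms a_gt fstar_minus_one_neg[OF assms(1)] fstar_one_pos[OF assms(1)]
      in \<open>simp_all add: fstar_cubic\<close>)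

lemma wz_root:
  assumes "cos t \<le> 0"
  shows "-1 < wz a b t" "wz a b t < 1" "fstar a b (wz a b t) t = 0"
proof -
  have "continuous_on {-1..1} (\<lambda>z. fstar a b z t)"
    unfolding fstar_def by (intro continuous_intros)
  moreover have "fstar a b (-1) t * fstar a b 1 t < 0"
    using fstar_minus_one_neg[OF assms] fstar_one_pos[OF assms] by (simp add: mult_neg_pos)
  ultimately obtain z where z: "-1 < z" "z < 1" "fstar a b z t = 0"
    using exists_zero_of_sign_change[of "-1" 1] by auto
  have "-1 < wz a b t \<and> wz a b t < 1 \<and> fstar a b (wz a b t) t = 0"
    unfolding wz_def by (rule theI[of _ z]) (use z fstar_root_unique[OF assms] in blast)+
  then show "-1 < wz a b t" "wz a b t < 1" "fstar a b (wz a b t) t = 0" by auto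
qed

lemma sgn_fstar:
  assumes "cos t \<le> 0" "-1 < z" "z < 1"
  shows "sgn (fstar a b z t) = sgn (z - wz a b t)"
proof -
  note w = wz_root[OF assms(1)]
  have only_root: "y = wz a b t" if "-1 < y" "y < 1" "fstar a b y t = 0" for y
    using fstar_root_unique[OF assms(1)] that w by blast
  have cont: "continuous_on {x..y} (\<lambda>z. fstar a b z t)" for x y
    unfolding fstar_def by (intro continuous_intros)
  consider "z < wz a b t" | "z = wz a b t" | "wz a b t < z" by linarith
  then show ?thesis
  proof cases
    case 1
    have "fstar a b z t < 0"
    proof (rule ccontr)
      assume "\<not> fstar a b z t < 0"
      moreover have "fstar a b z t \<noteq> 0" using only_root assms(2,3) 1 by blast
      ultimately have "fstar a b (-1) t * fstar a b z t < 0"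
        using fstar_minus_one_neg[OF assms(1)] by (simp add: mult_neg_pos)
      then obtain y where "-1 < y" "y < z" "fstar a b y t = 0"
        using exists_zero_of_sign_change[of "-1" z, OF _ cont] assms(2) by auto
      then show False using only_root[of y] 1 assms(3) by linarith
    qed
    then show ?thesis using 1 by simp
  next
    case 3
    have "0 < fstar a b z t"
    proof (rule ccontr)
      assume "\<not> 0 < fstar a b z t"
      moreover have "fstar a b z t \<noteq> 0" using only_root assms(2,3) 3 by blast
      ultimately have "fstar a b z t * fstar a b 1 t < 0"
        using fstar_one_pos[OF assms(1)] by (simp add: mult_neg_pos)
      then obtain y where "z < y" "y < 1" "fstar a b y t = 0"
        using exists_zero_of_sign_change[of z 1, OF _ cont] assms(3) by auto
      then show False using only_root[of y] 3 assms(2) by linarith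
    qed
    then show ?thesis using 3 by simp
  qed (simp add: w)
qed

lemma fstar_neg_iff:
  assumes "cos t \<le> 0" "-1 < z" "z < 1"
  shows "fstar a b z t < 0 \<longleftrightarrow> z < wz a b t"
  using sgn_fstar[OF assms] by (metis diff_less_0_iff_less sgn_less)

lemma fstar_pos_iff:
  assumes "cos t \<le> 0" "-1 < z" "z < 1"
  shows "0 < fstar a b z t \<longleftrightarrow> wz a b t < z"
  using sgn_fstar[OF assms] by (metis diff_gt_0_iff_gt sgn_greater)

lemma isCont_wz:
  assumes "pi / 2 < t0" "t0 < pi"
  shows "isCont (wz a b) t0"
proof -
  have near: "\<forall>\<^sub>F t in at t0. cos t \<le> 0"
    using order_tendstoD(1)[OF tendsto_ident_at assms(1)] order_tendstoD(2)[OF tendsto_ident_at assms(2)]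
    by eventually_elim (simp add: cos_neg less_imp_le)
  have fstar_cont: "((\<lambda>t. fstar a b z t) \<longlongrightarrow> fstar a b z t0) (at t0)" for z
    unfolding fstar_def by (intro tendsto_intros)
  have c0: "cos t0 \<le> 0" using cos_neg[OF assms] by simp
  note w0 = wz_root[OF c0]
  show ?thesis
    unfolding isCont_def
  proof (rule order_tendstoI)
    fix y assume "y < wz a b t0"
    define z where "z = max y ((wz a b t0 - 1) / 2)"
    have "y \<le> z" "(wz a b t0 - 1) / 2 \<le> z" unfolding z_def by simp_all
    then have z: "-1 < z" "z < wz a b t0" using w0 \<open>y < wz a b t0\<close> unfolding z_def by (auto simp: max_def)
    then have "fstar a b z t0 < 0" using fstar_neg_iff[OF c0] w0 by simp
    from near show "\<forall>\<^sub>F t in at t0. y < wz a b t"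
      using order_tendstoD(2)[OF fstar_cont \<open>fstar a b z t0 < 0\<close>]
    proof eventually_elim
      case (elim t)
      then show ?case using fstar_neg_iff[of t z] z \<open>y \<le> z\<close> w0 by simp
    qed
  next
    fix y assume "wz a b t0 < y"
    define z where "z = min y ((wz a b t0 + 1) / 2)"
    have "z \<le> y" "z \<le> (wz a b t0 + 1) / 2" unfolding z_def by (simp_all add: min_def)
    then have z: "z < 1" "wz a b t0 < z" using w0 \<open>wz a b t0 < y\<close> unfolding z_def by (auto simp: min_def)
    then have "0 < fstar a b z t0" using fstar_pos_iff[OF c0] w0 by simp
    from near show "\<forall>\<^sub>F t in at t0. wz a b t < y"
      using order_tendstoD(1)[OF fstar_cont \<open>0 < fstar a b z t0\<close>]
    proof eventually_elim
      case (elim t)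
      then show ?case using fstar_pos_iff[of t z] z \<open>z \<le> y\<close> w0 by simp
    qed
  qed
qed

lemma sgn_fstar_zero:
  assumes "pi / 2 < t" "t < pi"
  shows "sgn (fstar a b 0 t) = sgn (t - theta_a a)"
proof -
  define c where "c = cos t"
  define c\<theta> where "c\<theta> = cos (theta_a a)"
  note \<theta> = cos_theta_a[OF a_gt]
  have "c < 0" using cos_neg[OF assms] unfolding c_def .
  have "c\<theta> < 0" using cos_neg[OF \<theta>(2,3)] unfolding c\<theta>_def .
  have factored: "fstar a b 0 t = 8 * a * c * (c\<theta> + c) * (c\<theta> - c)"
    using four_a_cos_theta_a_squared[OF a_gt]
    unfolding fstar_zero c_def[symmetric] c\<theta>_def[symmetric] by (simp add: algebra_simps power2_eq_square)
  moreover have "0 < 8 * a * c * (c\<theta> + c)"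
    using \<open>c < 0\<close> \<open>c\<theta> < 0\<close> a_gt by (simp add: mult_pos_neg mult_neg_neg)
  moreover have "sgn (c\<theta> - c) = sgn (t - theta_a a)"
  proof -
    have "c\<theta> < c \<longleftrightarrow> t < theta_a a" "c < c\<theta> \<longleftrightarrow> theta_a a < t"
      unfolding c_def c\<theta>_def using assms \<theta>(2,3) by (simp_all add: cos_mono_less_eq)
    then show ?thesis by (cases t "theta_a a" rule: linorder_cases) simp_all
  qed
  ultimately show ?thesis
    using sgn_mult[of "8 * a * c * (c\<theta> + c)" "c\<theta> - c"] by (metis factored sgn_pos mult_1)
qed

lemma sgn_wz:
  assumes "pi / 2 < t" "t < pi"
  shows "sgn (wz a b t) = sgn (theta_a a - t)"
proof -
  have "cos t \<le> 0" using cos_neg[OF assms] by simp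
  then have "sgn (fstar a b 0 t) = - sgn (wz a b t)" using sgn_fstar[of t 0] by simp
  moreover have "sgn (t - theta_a a) = - sgn (theta_a a - t)" using sgn_minus[of "theta_a a - t"] by simp
  ultimately show ?thesis using sgn_fstar_zero[OF assms] by simp
qed

lemma wz_theta_a: "wz a b (theta_a a) = 0"
  using sgn_wz[OF cos_theta_a(2,3)[OF a_gt]] by (simp add: sgn_eq_0_iff)

lemma wz_pos: "pi / 2 < t \<Longrightarrow> t < theta_a a \<Longrightarrow> 0 < wz a b t"
  using sgn_wz[of t] cos_theta_a[OF a_gt] by (simp add: sgn_1_pos)

lemma wz_neg: "theta_a a < t \<Longrightarrow> t < pi \<Longrightarrow> wz a b t < 0"
  using sgn_wz[of t] cos_theta_a[OF a_gt] by (simp add: sgn_1_neg)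

lemma gm_eq: "gm a b m t = (inverse (wz a b t) - cos t) * sin ((real m + 1) * t) / sin t
    - cos ((real m + 1) * t) + wz a b t ^ (m + 1)"
  unfolding gm_def zeta_def by (simp add: divide_inverse power_inverse)

lemma gm_node_sign:
  assumes "pi / 2 < node m k" "node m k < pi"
  shows "(-1) ^ k * gm a b m (node m k) < 0"
proof -
  have "\<bar>wz a b (node m k)\<bar> < 1" using wz_root cos_neg[OF assms] by (simp add: abs_less_iff)
  then have "\<bar>wz a b (node m k)\<bar> ^ (m + 1) < 1" by (subst power_less_one_iff) auto
  then have "\<bar>(-1) ^ k * wz a b (node m k) ^ (m + 1)\<bar> < 1" by (simp only: abs_mult power_abs) simp
  moreover have "(-1) ^ k * gm a b m (node m k) = (-1) ^ k * wz a b (node m k) ^ (m + 1) - 1"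
    unfolding gm_eq mult_node by (simp add: sin_npi cos_npi algebra_simps flip: power_add)
  ultimately show ?thesis by (simp add: abs_less_iff)
qed

lemma isCont_gm:
  assumes "pi / 2 < t" "t < pi" "t \<noteq> theta_a a"
  shows "isCont (gm a b m) t"
proof -
  have "wz a b t \<noteq> 0" using sgn_wz[OF assms(1,2)] assms(3) by (auto simp: sgn_0_0)
  moreover have "sin t \<noteq> 0" using assms sin_gt_zero[of t] by simp
  ultimately show ?thesis
    unfolding gm_eq using isCont_wz[OF assms(1,2)] by (intro continuous_intros) auto
qed

lemma continuous_on_gm:
  assumes "S \<subseteq> {pi / 2 <..< pi} - {theta_a a}"
  shows "continuous_on S (gm a b m)"
  using assms by (intro continuous_at_imp_continuous_on ballI isCont_gm) auto

lemma gm_tendsto_at_top: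
  assumes cell: "node m k < theta_a a" "theta_a a < node m (Suc k)"
    and s: "\<bar>s\<bar> = 1" and F: "F \<le> at (theta_a a)"
    and side: "\<forall>\<^sub>F t in F. 0 < s * wz a b t"
  shows "filterlim (\<lambda>t. s * (-1) ^ k * gm a b m t) at_top F"
proof -
  (* s = 1 gives the blow-up left of theta_a, s = -1 the one right of it. *)
  define \<theta> where "\<theta> = theta_a a"
  note \<theta> = cos_theta_a[OF a_gt, folded \<theta>_def]
  define q where "q t = (-1) ^ k * sin ((real m + 1) * t) / sin t" for t
  define r where "r t = s * (-1) ^ k * (wz a b t ^ (m + 1) - cos ((real m + 1) * t)
      - cos t * sin ((real m + 1) * t) / sin t)" for t
  have "inverse s = s" using s by (cases "s < 0") auto
  then have split: "s * (-1) ^ k * gm a b m t = r t + inverse (s * wz a b t) * q t" for t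
    unfolding gm_eq q_def r_def by (simp add: algebra_simps divide_inverse)
  have "sin \<theta> > 0" using \<theta> by (intro sin_gt_zero) auto
  then have "isCont q \<theta>" "isCont r \<theta>"
    unfolding q_def r_def using isCont_wz[OF \<theta>(2,3)] by (auto intro: continuous_intros)
  then have q_lim: "(q \<longlongrightarrow> q \<theta>) F" and r_lim: "(r \<longlongrightarrow> r \<theta>) F"
    using tendsto_mono[OF F[folded \<theta>_def]] unfolding isCont_def by blast+
  have "0 < q \<theta>"
    unfolding q_def using sin_sign_between_nodes[OF cell[folded \<theta>_def]] \<open>sin \<theta> > 0\<close> by simp
  have "((\<lambda>t. s * wz a b t) \<longlongrightarrow> s * 0) F"
    using tendsto_mono[OF F] isCont_wz[OF \<theta>(2,3)] wz_theta_a
    unfolding isCont_def \<theta>_def by (intro tendsto_mult_left) simp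
  then have "filterlim (\<lambda>t. inverse (s * wz a b t)) at_top F"
    using side by (intro filterlim_inverse_at_top) simp_all
  then have "filterlim (\<lambda>t. inverse (s * wz a b t) * q t) at_top F"
    by (rule filterlim_at_top_mult_tendsto_pos[OF q_lim \<open>0 < q \<theta>\<close>])
  then show ?thesis unfolding split by (rule filterlim_tendsto_add_at_top[OF r_lim])
qed

lemma gm_zero_before_theta_a:
  assumes "pi / 2 < node m k" and cell: "node m k < theta_a a" "theta_a a < node m (Suc k)"
  obtains t where "node m k < t" "t < theta_a a" "gm a b m t = 0"
proof -
  define \<theta> where "\<theta> = theta_a a"
  note \<theta> = cos_theta_a[OF a_gt, folded \<theta>_def]
  have "\<forall>\<^sub>F t in at_left \<theta>. 0 < 1 * wz a b t"
    using eventually_at_left_real[OF \<theta>(2)] by eventually_elim (simp add: wz_pos \<theta>_def)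
  moreover have "at_left \<theta> \<le> at (theta_a a)" unfolding \<theta>_def by (rule at_le) simp
  ultimately have "filterlim (\<lambda>t. 1 * (-1) ^ k * gm a b m t) at_top (at_left \<theta>)"
    by (intro gm_tendsto_at_top[OF cell]) simp_all
  then have "\<forall>\<^sub>F t in at_left \<theta>. 1 \<le> (-1) ^ k * gm a b m t"
    unfolding filterlim_at_top by simp
  moreover have "\<forall>\<^sub>F t in at_left \<theta>. t \<in> {node m k<..<\<theta>}"
    using eventually_at_left_real cell \<theta>_def by simp
  ultimately have "\<forall>\<^sub>F t in at_left \<theta>. 1 \<le> (-1) ^ k * gm a b m t \<and> t \<in> {node m k<..<\<theta>}"
    by (rule eventually_conj)
  then obtain t1 where t1: "1 \<le> (-1) ^ k * gm a b m t1" "node m k < t1" "t1 < \<theta>"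
    using eventually_happens'[OF trivial_limit_at_left_real] by auto
  have "node m k < pi" using cell \<theta> \<theta>_def by linarith
  have "0 < (-1) ^ k * gm a b m t1" using t1(1) by linarith
  with gm_node_sign[OF assms(1) \<open>node m k < pi\<close>]
  have "gm a b m (node m k) * gm a b m t1 < 0" by (rule sign_change_neg_one_power)
  moreover have "continuous_on {node m k..t1} (gm a b m)"
    using assms t1 \<theta> unfolding \<theta>_def by (intro continuous_on_gm) auto
  ultimately obtain t where "node m k < t" "t < t1" "gm a b m t = 0"
    using exists_zero_of_sign_change[of "node m k" t1] t1 by auto
  then show ?thesis using that t1 \<theta>_def by simp
qed

lemma gm_zero_after_theta_a:
  assumes cell: "node m k < theta_a a" "theta_a a < node m (Suc k)" and "node m (Suc k) < pi"
  obtains t where "theta_a a < t" "t < node m (Suc k)" "gm a b m t = 0"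
proof -
  define \<theta> where "\<theta> = theta_a a"
  note \<theta> = cos_theta_a[OF a_gt, folded \<theta>_def]
  have "\<forall>\<^sub>F t in at_right \<theta>. 0 < -1 * wz a b t"
    using eventually_at_right_real[OF \<theta>(3)] by eventually_elim (simp add: wz_neg \<theta>_def)
  moreover have "at_right \<theta> \<le> at (theta_a a)" unfolding \<theta>_def by (rule at_le) simp
  ultimately have "filterlim (\<lambda>t. -1 * (-1) ^ k * gm a b m t) at_top (at_right \<theta>)"
    by (intro gm_tendsto_at_top[OF cell]) simp_all
  then have "\<forall>\<^sub>F t in at_right \<theta>. 1 \<le> -1 * (-1) ^ k * gm a b m t"
    unfolding filterlim_at_top by blast
  moreover have "\<forall>\<^sub>F t in at_right \<theta>. t \<in> {\<theta><..<node m (Suc k)}"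
    using eventually_at_right_real cell \<theta>_def by simp
  ultimately have "\<forall>\<^sub>F t in at_right \<theta>. 1 \<le> -1 * (-1) ^ k * gm a b m t \<and> t \<in> {\<theta><..<node m (Suc k)}"
    by (rule eventually_conj)
  then obtain t1 where t1: "1 \<le> -1 * (-1) ^ k * gm a b m t1" "\<theta> < t1" "t1 < node m (Suc k)"
    using eventually_happens'[OF trivial_limit_at_right_real] by auto
  have "pi / 2 < node m (Suc k)" using cell \<theta> \<theta>_def by linarith
  from gm_node_sign[OF this assms(3)]
  have "0 < (-1) ^ k * gm a b m (node m (Suc k))" by simp
  moreover have "(-1) ^ k * gm a b m t1 < 0" using t1(1) by simp
  ultimately have "gm a b m t1 * gm a b m (node m (Suc k)) < 0" by (rule sign_change_neg_one_power[rotated])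
  moreover have "continuous_on {t1..node m (Suc k)} (gm a b m)"
    using assms t1 \<theta> unfolding \<theta>_def by (intro continuous_on_gm) auto
  ultimately obtain t where "t1 < t" "t < node m (Suc k)" "gm a b m t = 0"
    using exists_zero_of_sign_change[of t1 "node m (Suc k)"] t1 by auto
  then show ?thesis using that t1(2) unfolding \<theta>_def by (meson less_trans)
qed

end

theorem mainTheorem18:
  fixes a b :: real and m h :: nat
  assumes "b > 0" and "1 + a + b > 0" and "9 - 27 * a + b > 0"
    and "2 - 8 * a + 8 * a ^ 2 + a * b \<noteq> 0" and "b + 1 - a \<noteq> 0"
    and "a > 1 / 4" and "m \<ge> 6"
    and "(m + 1) div 2 + 1 \<le> h" and "h \<le> m + 1"
    and "theta_a a \<in> Jh m h"
  shows "((m + 1) div 2 + 2 \<le> h \<and> h \<le> m \<longrightarrow>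
           (\<exists>t1 t2. t1 \<noteq> t2 \<and> t1 \<in> Jh m h - {theta_a a} \<and> t2 \<in> Jh m h - {theta_a a}
              \<and> gm a b m t1 = 0 \<and> gm a b m t2 = 0))
       \<and> ((h = m + 1 \<or> h = (m + 1) div 2 + 1) \<longrightarrow>
           (\<exists>t. t \<in> Jh m h - {theta_a a} \<and> gm a b m t = 0))"
proof -
  interpret gm_regime a b using assms(1,3,6) by unfold_locales linarith+
  define k where "k = h - 1"
  have h: "h = Suc k" using assms(8) unfolding k_def by simp
  have \<theta>: "pi / 2 < theta_a a" "theta_a a < pi" using cos_theta_a[OF a_gt] by simp_all
  show ?thesis
  proof (cases "h = (m + 1) div 2 + 1")
    case True
    then have J: "Jh m h = {pi / 2 <..< node m (Suc k)}" unfolding Jh_def node_def h by simp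
    have "node m k \<le> pi / 2" using True h by (intro node_le_half_pi) linarith
    moreover have "node m (Suc k) < pi" using True h assms(7) by (intro node_less_pi) linarith
    ultimately obtain t where t: "theta_a a < t" "t < node m (Suc k)" "gm a b m t = 0"
      using gm_zero_after_theta_a[of m k] assms(10) J by force
    then have "t \<in> Jh m h - {theta_a a}" using J \<theta> by auto
    then show ?thesis using True t by auto
  next
    case False
    then have J: "Jh m h = {node m k <..< node m (Suc k)}" unfolding Jh_def node_def h by simp
    then have cell: "node m k < theta_a a" "theta_a a < node m (Suc k)" using assms(10) by auto
    have "pi / 2 < node m k" using False h assms(8) by (intro half_pi_less_node) linarith
    then obtain t1 where t1: "node m k < t1" "t1 < theta_a a" "gm a b m t1 = 0"
      using gm_zero_before_theta_a[OF _ cell] by blast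
    then have t1_J: "t1 \<in> Jh m h - {theta_a a}" using J cell by auto
    show ?thesis
    proof (cases "h \<le> m")
      case True
      then have "node m (Suc k) < pi" using h by (intro node_less_pi) linarith
      then obtain t2 where "theta_a a < t2" "t2 < node m (Suc k)" "gm a b m t2 = 0"
        using gm_zero_after_theta_a[OF cell] by blast
      then have "t2 \<in> Jh m h - {theta_a a}" "t1 \<noteq> t2" using J cell t1 by auto
      then show ?thesis using True False t1 t1_J \<open>gm a b m t2 = 0\<close> by blast
    next
      case False
      then show ?thesis using t1 t1_J by auto
    qed
  qed
qed

end
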